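(* Consider a two-hop amplify-and-forward network with a source, a destination and $K$ energy-harvesting relays $R_1,\dots,R_K$, each with a battery, operating over time slots $t=1,2,\dots$. In slot $t$ the source transmits with power $P$; relay $R_k$ splits its received power $P|h_k(t)|^2$ with ratios $\lambda_{k,I}(t),\lambda_{k,F}(t),\lambda_{k,B}(t)\ge0$, $\lambda_{k,I}(t)+\lambda_{k,F}(t)+\lambda_{k,B}(t)=1$: fraction $\lambda_{k,I}(t)$ is used for information (then corrupted by noise of variance $\sigma_b^2>0$), fraction $\lambda_{k,F}(t)$ is harvested for immediate forwarding, giving power $\eta_1\lambda_{k,F}(t)P|h_k(t)|^2$, and fraction $\lambda_{k,B}(t)$ charges the battery, adding energy $\eta_1\eta_2\lambda_{k,B}(t)P|h_k(t)|^2$, where $\eta_1,\eta_2\in(0,1]$. The relay additionally discharges $b_{k,F}(t)$ with $0\le b_{k,F}(t)\le B_k(t)$ from its battery, where $B_k(t)$ is the battery level at the start of slot $t$, and transmits with power $p_{k,R}(t)=\eta_1\lambda_{k,F}(t)P|h_k(t)|^2+b_{k,F}(t)$; the battery evolves as $B_k(t+1)=B_k(t)+\eta_1\eta_2\lambda_{k,B}(t)P|h_k(t)|^2-b_{k,F}(t)$. With amplification gain $\beta_k(t)=\sqrt{p_{k,R}(t)/(\lambda_{k,I}(t)P|h_k(t)|^2+\sigma_b^2)}$ and phase-aligned distributed beamforming, the SNR at the destination in slot $t$ is $$SNR(t)=\frac{P\Big(\sum_{k=1}^K\beta_k(t)|h_k(t)g_k(t)|\sqrt{\lambda_{k,I}(t)}\Big)^2}{\sum_{k=1}^K\beta_k(t)^2|g_k(t)|^2\sigma_b^2+\sigma_D^2},$$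 with $\sigma_D^2>0$. In the greedy method, at each slot $t$ the decision $(\lambda_{k,I}(t),\lambda_{k,F}(t),\lambda_{k,B}(t),b_{k,F}(t))_{k}$ is chosen to maximize $\tfrac12\log(1+SNR(t))$ given the current battery levels $B_k(t)$, ignoring the effect on later slots. If all batteries are empty initially ($B_k(1)=0$ for all $k$), then the greedy-optimized joint power-splitting and battery operation design uses up the harvested energy at each transmission: $\lambda_{k,B}(t)=0$ and $b_{k,F}(t)=0$ for all $k$ and all $t$, and all batteries remain empty.
   Context: $h_k(t)$ and $g_k(t)$ are the complex source–relay and relay–destination channel gains in slot $t$; $\eta_1$ is the RF-to-DC conversion efficiency and $\eta_2$ the battery storage efficiency. Antenna noise is neglected. Battery energies take values in a discrete set of levels, which does not affect the statement since no charging/discharging occurs. *)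

theory Defs
  imports Complex_Main
begin

text \<open>All per-slot quantities below are functions of the
relay index k (for a fixed slot). Parameters: P source power, sb2 = relay noise variance,
sD2 = destination noise variance, eta1 = RF-to-DC efficiency.\<close>

definition relay_power :: "real \<Rightarrow> real \<Rightarrow> complex \<Rightarrow> real \<Rightarrow> real \<Rightarrow> real" where
  "relay_power eta1 P h lF bF = eta1 * lF * P * (cmod h)^2 + bF"

definition amp_gain :: "real \<Rightarrow> real \<Rightarrow> real \<Rightarrow> complex \<Rightarrow> real \<Rightarrow> real \<Rightarrow> real \<Rightarrow> real" where
  "amp_gain eta1 P sb2 h lI lF bF =
     sqrt (relay_power eta1 P h lF bF / (lI * P * (cmod h)^2 + sb2))"

definition snr :: "nat \<Rightarrow> real \<Rightarrow> real \<Rightarrow> real \<Rightarrow> real \<Rightarrow>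
    (nat \<Rightarrow> complex) \<Rightarrow> (nat \<Rightarrow> complex) \<Rightarrow>
    (nat \<Rightarrow> real) \<Rightarrow> (nat \<Rightarrow> real) \<Rightarrow> (nat \<Rightarrow> real) \<Rightarrow> real" where
  "snr K P sb2 sD2 eta1 h g lI lF bF =
     P * (\<Sum>k<K. amp_gain eta1 P sb2 (h k) (lI k) (lF k) (bF k) * cmod (h k * g k) * sqrt (lI k))^2
     / ((\<Sum>k<K. (amp_gain eta1 P sb2 (h k) (lI k) (lF k) (bF k))^2 * (cmod (g k))^2 * sb2) + sD2)"

definition rate :: "nat \<Rightarrow> real \<Rightarrow> real \<Rightarrow> real \<Rightarrow> real \<Rightarrow>
    (nat \<Rightarrow> complex) \<Rightarrow> (nat \<Rightarrow> complex) \<Rightarrow>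
    (nat \<Rightarrow> real) \<Rightarrow> (nat \<Rightarrow> real) \<Rightarrow> (nat \<Rightarrow> real) \<Rightarrow> real" where
  "rate K P sb2 sD2 eta1 h g lI lF bF = 1/2 * ln (1 + snr K P sb2 sD2 eta1 h g lI lF bF)"

definition feasible :: "nat \<Rightarrow> (nat \<Rightarrow> real) \<Rightarrow>
    (nat \<Rightarrow> real) \<Rightarrow> (nat \<Rightarrow> real) \<Rightarrow> (nat \<Rightarrow> real) \<Rightarrow> (nat \<Rightarrow> real) \<Rightarrow> bool" where
  "feasible K B lI lF lB bF \<longleftrightarrow>
     (\<forall>k<K. 0 \<le> lI k \<and> 0 \<le> lF k \<and> 0 \<le> lB k \<and> lI k + lF k + lB k = 1
            \<and> 0 \<le> bF k \<and> bF k \<le> B k)"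

definition greedy_opt :: "nat \<Rightarrow> real \<Rightarrow> real \<Rightarrow> real \<Rightarrow> real \<Rightarrow>
    (nat \<Rightarrow> complex) \<Rightarrow> (nat \<Rightarrow> complex) \<Rightarrow> (nat \<Rightarrow> real) \<Rightarrow>
    (nat \<Rightarrow> real) \<Rightarrow> (nat \<Rightarrow> real) \<Rightarrow> (nat \<Rightarrow> real) \<Rightarrow> (nat \<Rightarrow> real) \<Rightarrow> bool" where
  "greedy_opt K P sb2 sD2 eta1 h g B lI lF lB bF \<longleftrightarrow>
     feasible K B lI lF lB bF \<and>
     (\<forall>lI' lF' lB' bF'. feasible K B lI' lF' lB' bF' \<longrightarrow>
        rate K P sb2 sD2 eta1 h g lI' lF' bF' \<le> rate K P sb2 sD2 eta1 h g lI lF bF)"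

end

theory Submission
  imports Defs
begin

text \<open>Suppose that with empty batteries some relay charges, \<open>\<lambda>\<^sub>B > 0\<close>. Since nothing can be
discharged, the charged energy does not help the current slot, and the fraction \<open>\<lambda>\<^sub>B\<close> can be
reassigned to information and forwarding. If the relay already forwards (\<open>\<lambda>\<^sub>F > 0\<close>), scaling
\<open>\<lambda>\<^sub>F\<close> together with \<open>\<lambda>\<^sub>I P |h|\<^sup>2 + \<sigma>\<^sub>b\<^sup>2\<close> keeps the amplification gain and raises
\<open>\<surd>\<lambda>\<^sub>I\<close>, hence the received signal and nothing else. If it is silent (\<open>\<lambda>\<^sub>F = 0\<close>), switching
it on with a sufficiently small gain adds more coherent signal than noise. Either way the
greedy decision was not optimal, so by induction on the slot no relay ever charges or
discharges and the batteries stay empty.\<close>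

lemma amp_gain_no_discharge:
  "amp_gain eta1 P sb2 h lI lF 0 = sqrt (eta1 * lF * P * (cmod h)^2 / (lI * P * (cmod h)^2 + sb2))"
  unfolding amp_gain_def relay_power_def by simp

lemma snr_nonneg:
  assumes "0 \<le> P" "0 \<le> sb2" "0 \<le> sD2"
  shows "0 \<le> snr K P sb2 sD2 eta1 h g lI lF bF"
  unfolding snr_def using assms by (intro divide_nonneg_nonneg add_nonneg_nonneg sum_nonneg) auto

lemma rate_strict_mono_snr:
  assumes "0 \<le> P" "0 \<le> sb2" "0 \<le> sD2"
    and "snr K P sb2 sD2 eta1 h g lI lF bF < snr K P sb2 sD2 eta1 h g lI' lF' bF'"
  shows "rate K P sb2 sD2 eta1 h g lI lF bF < rate K P sb2 sD2 eta1 h g lI' lF' bF'"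
  using assms snr_nonneg[OF assms(1-3)] unfolding rate_def by (simp add: add_pos_nonneg)

lemma signal_ratio_less_new_term:
  fixes P S N c b a :: real
  assumes "P > 0" "S \<ge> 0" "N > 0" "c \<ge> 0" "b > 0" "a > 0" "b * S * c \<le> a * N"
  shows "P * S^2 / N < P * (S + b * a)^2 / (N + c * b^2)"
proof -
  have "S * b * (b * S * c) \<le> S * b * (a * N)"
    using assms by (intro mult_left_mono) auto
  moreover have "0 < b^2 * a^2 * N" "0 \<le> S * b * a * N" using assms by simp_all
  ultimately have "S^2 * (N + c * b^2) < (S + b * a)^2 * N"
    by (simp add: power2_eq_square algebra_simps)
  hence "P * (S^2 * (N + c * b^2)) < P * ((S + b * a)^2 * N)" using assms by simp
  moreover have "N + c * b^2 > 0" using assms by (simp add: add_pos_nonneg)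
  ultimately show ?thesis using assms(3) by (simp add: divide_simps algebra_simps)
qed

text \<open>The SNR as a function of the split \<open>(x, y) = (\<lambda>\<^sub>I, \<lambda>\<^sub>F)\<close> of one relay that discharges
nothing, the other relays being fixed: \<open>S\<close> is their coherent signal amplitude and \<open>N\<close> their
noise plus \<open>\<sigma>\<^sub>D\<^sup>2\<close>, while \<open>m = |h g|\<close> and \<open>c = |g|\<^sup>2 \<sigma>\<^sub>b\<^sup>2\<close> belong to the relay itself.\<close>

definition relay_snr ::
    "real \<Rightarrow> real \<Rightarrow> real \<Rightarrow> complex \<Rightarrow> real \<Rightarrow> real \<Rightarrow> real \<Rightarrow> real \<Rightarrow> real \<Rightarrow> real \<Rightarrow> real" where
  "relay_snr eta1 P sb2 h m c S N x y =
     P * (S + amp_gain eta1 P sb2 h x y 0 * m * sqrt x)^2 / (N + (amp_gain eta1 P sb2 h x y 0)^2 * c)"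

lemma relay_snr_less_rescaled:
  fixes h :: complex
  assumes "P > 0" "sb2 > 0" "eta1 > 0" "h \<noteq> 0" "c > 0" "m > 0" "S \<ge> 0" "N > 0"
    and "x0 \<ge> 0" "y0 > 0" "z > 0"
  obtains x y where "0 \<le> x" "0 \<le> y" "x + y \<le> x0 + y0 + z"
    "relay_snr eta1 P sb2 h m c S N x0 y0 < relay_snr eta1 P sb2 h m c S N x y"
proof -
  define H where "H = (cmod h)^2"
  define d where "d = x0 * P * H + sb2"
  define e where "e = z * d / (d + y0 * P * H)"
  define x where "x = x0 + e"
  define y where "y = y0 * (x * P * H + sb2) / d"
  have "H > 0" using assms unfolding H_def by simp
  hence "d > 0" "d + y0 * P * H > 0" unfolding d_def using assms by (simp_all add: add_nonneg_pos)
  hence "e > 0" unfolding e_def using assms by simp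
  have x_denom: "x * P * H + sb2 = d + e * P * H" unfolding x_def d_def by (simp add: algebra_simps)
  have "e * (d + y0 * P * H) = z * d" unfolding e_def using \<open>d + y0 * P * H > 0\<close> by simp
  moreover have "y = y0 + e * y0 * P * H / d"
    unfolding y_def x_denom using \<open>d > 0\<close> by (simp add: field_simps)
  ultimately have "d * (e + y) = d * (y0 + z)"
    using \<open>d > 0\<close> by (simp add: field_simps)
  hence "x + y = x0 + y0 + z" unfolding x_def using \<open>d > 0\<close> by simp
  moreover have "0 \<le> x" "0 \<le> y" unfolding y_def x_denom x_def
    using assms \<open>e > 0\<close> \<open>d > 0\<close> \<open>H > 0\<close> by simp_all
  \<comment> \<open>the ratio \<open>\<lambda>\<^sub>F / (\<lambda>\<^sub>I P |h|\<^sup>2 + \<sigma>\<^sub>b\<^sup>2)\<close>, hence the gain, is unchanged\<close>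
  moreover have same_gain: "amp_gain eta1 P sb2 h x y 0 = amp_gain eta1 P sb2 h x0 y0 0"
  proof -
    have "d + e * P * H > 0" using \<open>d > 0\<close> \<open>e > 0\<close> \<open>H > 0\<close> assms by (simp add: add_pos_pos)
    hence "y / (x * P * H + sb2) = y0 / d" unfolding y_def x_denom by simp
    hence "eta1 * y * P * H / (x * P * H + sb2) = eta1 * y0 * P * H / d"
      by (metis (no_types, lifting) times_divide_eq_right mult.commute mult.left_commute)
    thus ?thesis unfolding amp_gain_no_discharge H_def[symmetric] d_def[symmetric] by simp
  qed
  moreover have "relay_snr eta1 P sb2 h m c S N x0 y0 < relay_snr eta1 P sb2 h m c S N x y"
  proof -
    define b where "b = amp_gain eta1 P sb2 h x0 y0 0"
    have "b > 0" unfolding b_def amp_gain_no_discharge H_def[symmetric] d_def[symmetric]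
      using assms \<open>H > 0\<close> \<open>d > 0\<close> by simp
    have "sqrt x0 < sqrt x" unfolding x_def using \<open>e > 0\<close> by simp
    hence "S + b * m * sqrt x0 < S + b * m * sqrt x" using \<open>b > 0\<close> assms by simp
    moreover have "0 \<le> S + b * m * sqrt x0" using \<open>b > 0\<close> assms by simp
    ultimately have "(S + b * m * sqrt x0)^2 < (S + b * m * sqrt x)^2"
      by (intro power_strict_mono) auto
    moreover have "N + b^2 * c > 0" using assms by (simp add: add_pos_nonneg)
    ultimately show ?thesis
      unfolding relay_snr_def same_gain b_def[symmetric] using assms
      by (simp add: divide_strict_right_mono)
  qed
  ultimately show ?thesis using that by simp
qed

lemma relay_snr_less_activated:
  fixes h :: complex
  assumes "P > 0" "sb2 > 0" "eta1 > 0" "h \<noteq> 0" "c > 0" "m > 0" "S \<ge> 0" "N > 0"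
    and "x0 \<ge> 0" "z > 0"
  obtains x y where "0 \<le> x" "0 \<le> y" "x + y \<le> x0 + z"
    "relay_snr eta1 P sb2 h m c S N x0 0 < relay_snr eta1 P sb2 h m c S N x y"
proof -
  define H where "H = (cmod h)^2"
  define x where "x = x0 + z / 2"
  define a where "a = m * sqrt x"
  define M where "M = eta1 * P * H / (x * P * H + sb2)"
  \<comment> \<open>any gain \<open>b \<le> \<gamma>\<close> satisfies \<open>b S c \<le> a N\<close>\<close>
  define \<gamma> where "\<gamma> = a * N / (S * c + 1)"
  define y where "y = min (z / 2) (\<gamma>^2 / M)"
  define b where "b = amp_gain eta1 P sb2 h x y 0"
  have "H > 0" using assms unfolding H_def by simp
  have "x > 0" unfolding x_def using assms by simp
  hence "a > 0" "M > 0" unfolding a_def M_def using assms \<open>H > 0\<close> by (simp_all add: add_pos_pos)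
  hence "\<gamma> > 0" unfolding \<gamma>_def using assms by (simp add: add_nonneg_pos)
  hence "y > 0" unfolding y_def using assms \<open>M > 0\<close> by simp
  have b_eq: "b = sqrt (y * M)" unfolding b_def amp_gain_no_discharge H_def[symmetric] M_def
    by (simp add: algebra_simps)
  hence "b > 0" using \<open>y > 0\<close> \<open>M > 0\<close> by simp
  have "y * M \<le> \<gamma>^2" unfolding y_def using \<open>M > 0\<close> by (simp add: min_def field_simps)
  hence "b \<le> \<gamma>" unfolding b_eq using \<open>\<gamma> > 0\<close> real_sqrt_le_mono by fastforce
  hence "b * S * c \<le> \<gamma> * S * c" using assms by (simp add: mult_right_mono)
  also have "\<dots> = a * N * (S * c / (S * c + 1))" unfolding \<gamma>_def by simp
  also have "\<dots> \<le> a * N"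
    using assms \<open>a > 0\<close> by (intro mult_left_le) (simp_all add: divide_le_eq_1 add_nonneg_pos)
  finally have "b * S * c \<le> a * N" .
  hence "P * S^2 / N < P * (S + b * a)^2 / (N + c * b^2)"
    using assms \<open>b > 0\<close> \<open>a > 0\<close> by (intro signal_ratio_less_new_term) auto
  moreover have "relay_snr eta1 P sb2 h m c S N x0 0 = P * S^2 / N"
    unfolding relay_snr_def amp_gain_no_discharge by simp
  moreover have "relay_snr eta1 P sb2 h m c S N x y = P * (S + b * a)^2 / (N + c * b^2)"
    unfolding relay_snr_def b_def[symmetric] a_def by (simp add: algebra_simps)
  moreover have "x + y \<le> x0 + z" unfolding x_def y_def by simp
  ultimately show ?thesis using that[of x y] \<open>x > 0\<close> \<open>y > 0\<close> by simp
qed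

lemma relay_snr_improvable:
  fixes h :: complex
  assumes "P > 0" "sb2 > 0" "eta1 > 0" "h \<noteq> 0" "c > 0" "m > 0" "S \<ge> 0" "N > 0"
    and "x0 \<ge> 0" "y0 \<ge> 0" "z > 0"
  obtains x y where "0 \<le> x" "0 \<le> y" "x + y \<le> x0 + y0 + z"
    "relay_snr eta1 P sb2 h m c S N x0 y0 < relay_snr eta1 P sb2 h m c S N x y"
proof (cases "y0 > 0")
  case True
  from relay_snr_less_rescaled[OF assms(1-9) True assms(11)] that show ?thesis .
next
  case False
  with assms(10) have "y0 = 0" by simp
  from relay_snr_less_activated[OF assms(1-9) assms(11)] that show ?thesis
    unfolding \<open>y0 = 0\<close> by (metis add_0_right)
qed

lemma snr_as_relay_snr:
  assumes "k < K" "bF k = 0" "0 \<le> eta1" "0 \<le> P" "0 \<le> sb2" "0 < sD2"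
    and "\<forall>j<K. 0 \<le> lI j \<and> 0 \<le> lF j \<and> 0 \<le> bF j"
  obtains S N where "S \<ge> 0" "N > 0"
    "\<And>x y. snr K P sb2 sD2 eta1 h g (lI(k := x)) (lF(k := y)) bF
       = relay_snr eta1 P sb2 (h k) (cmod (h k * g k)) ((cmod (g k))^2 * sb2) S N x y"
proof
  let ?others = "{..<K} - {k}"
  let ?b = "\<lambda>j. amp_gain eta1 P sb2 (h j) (lI j) (lF j) (bF j)"
  show "0 \<le> (\<Sum>j\<in>?others. ?b j * cmod (h j * g j) * sqrt (lI j))"
    using assms unfolding amp_gain_def relay_power_def by (intro sum_nonneg) auto
  show "0 < (\<Sum>j\<in>?others. (?b j)^2 * (cmod (g j))^2 * sb2) + sD2"
    using assms by (intro add_nonneg_pos sum_nonneg) auto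
  fix x y
  let ?b' = "\<lambda>j. amp_gain eta1 P sb2 (h j) ((lI(k := x)) j) ((lF(k := y)) j) (bF j)"
  have others_unchanged:
    "(\<Sum>j\<in>?others. ?b' j * cmod (h j * g j) * sqrt ((lI(k := x)) j))
       = (\<Sum>j\<in>?others. ?b j * cmod (h j * g j) * sqrt (lI j))"
    "(\<Sum>j\<in>?others. (?b' j)^2 * (cmod (g j))^2 * sb2)
       = (\<Sum>j\<in>?others. (?b j)^2 * (cmod (g j))^2 * sb2)"
    by (auto intro!: sum.cong)
  have "k \<in> {..<K}" using assms by simp
  note split = sum.remove[OF finite_lessThan this]
  show "snr K P sb2 sD2 eta1 h g (lI(k := x)) (lF(k := y)) bF
       = relay_snr eta1 P sb2 (h k) (cmod (h k * g k)) ((cmod (g k))^2 * sb2)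
           (\<Sum>j\<in>?others. ?b j * cmod (h j * g j) * sqrt (lI j))
           ((\<Sum>j\<in>?others. (?b j)^2 * (cmod (g j))^2 * sb2) + sD2) x y"
    unfolding snr_def relay_snr_def split others_unchanged using assms(2)
    by (simp add: algebra_simps)
qed

lemma charging_decision_improvable:
  assumes "P > 0" "sb2 > 0" "sD2 > 0" "eta1 > 0"
    and feas: "feasible K B lI lF lB bF" and "k < K" "B k = 0" "lB k > 0"
    and "h k \<noteq> 0" "g k \<noteq> 0"
  obtains lI' lF' lB' where "feasible K B lI' lF' lB' bF"
    "rate K P sb2 sD2 eta1 h g lI lF bF < rate K P sb2 sD2 eta1 h g lI' lF' bF"
proof -
  have k_split: "0 \<le> lI k" "0 \<le> lF k" "lI k + lF k + lB k = 1" and "bF k = 0"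
    using feas \<open>k < K\<close> \<open>B k = 0\<close> unfolding feasible_def by (auto intro: antisym)
  have "\<forall>j<K. 0 \<le> lI j \<and> 0 \<le> lF j \<and> 0 \<le> bF j" using feas unfolding feasible_def by blast
  then obtain S N where "S \<ge> 0" "N > 0" and snr_eq:
    "\<And>x y. snr K P sb2 sD2 eta1 h g (lI(k := x)) (lF(k := y)) bF
       = relay_snr eta1 P sb2 (h k) (cmod (h k * g k)) ((cmod (g k))^2 * sb2) S N x y"
    using snr_as_relay_snr[where h = h and g = g and k = k and bF = bF,
        OF \<open>k < K\<close> \<open>bF k = 0\<close>] assms(1-4)
    by (metis less_imp_le)
  have "cmod (h k * g k) > 0" "(cmod (g k))^2 * sb2 > 0" using assms by (simp_all add: norm_mult)
  then obtain x y where "0 \<le> x" "0 \<le> y" "x + y \<le> lI k + lF k + lB k" and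
    less: "relay_snr eta1 P sb2 (h k) (cmod (h k * g k)) ((cmod (g k))^2 * sb2) S N (lI k) (lF k)
         < relay_snr eta1 P sb2 (h k) (cmod (h k * g k)) ((cmod (g k))^2 * sb2) S N x y"
    using relay_snr_improvable[OF assms(1,2,4,9) _ _ \<open>S \<ge> 0\<close> \<open>N > 0\<close> k_split(1,2) \<open>lB k > 0\<close>]
    by blast
  have "snr K P sb2 sD2 eta1 h g lI lF bF < snr K P sb2 sD2 eta1 h g (lI(k := x)) (lF(k := y)) bF"
    using less snr_eq[of "lI k" "lF k"] snr_eq[of x y] by simp
  hence "rate K P sb2 sD2 eta1 h g lI lF bF < rate K P sb2 sD2 eta1 h g (lI(k := x)) (lF(k := y)) bF"
    using assms by (intro rate_strict_mono_snr) auto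
  moreover have "feasible K B (lI(k := x)) (lF(k := y)) (lB(k := 1 - x - y)) bF"
    using feas \<open>0 \<le> x\<close> \<open>0 \<le> y\<close> \<open>x + y \<le> lI k + lF k + lB k\<close> k_split(3)
    unfolding feasible_def by auto
  ultimately show ?thesis using that by blast
qed

lemma greedy_opt_empty_battery:
  assumes "P > 0" "sb2 > 0" "sD2 > 0" "eta1 > 0"
    and greedy: "greedy_opt K P sb2 sD2 eta1 h g B lI lF lB bF"
    and "k < K" "B k = 0" "h k \<noteq> 0" "g k \<noteq> 0"
  shows "lB k = 0 \<and> bF k = 0"
proof -
  have feas: "feasible K B lI lF lB bF" using greedy unfolding greedy_opt_def by blast
  have "\<not> lB k > 0"
  proof
    assume "lB k > 0"
    then obtain lI' lF' lB' where "feasible K B lI' lF' lB' bF"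
      and better: "rate K P sb2 sD2 eta1 h g lI lF bF < rate K P sb2 sD2 eta1 h g lI' lF' bF"
      by (rule charging_decision_improvable[where k = k and B = B and lB = lB and h = h and g = g,
            OF assms(1-4) feas assms(6,7) _ assms(8,9)])
    with greedy have "rate K P sb2 sD2 eta1 h g lI' lF' bF \<le> rate K P sb2 sD2 eta1 h g lI lF bF"
      unfolding greedy_opt_def by blast
    with better show False by simp
  qed
  moreover have "0 \<le> lB k" "0 \<le> bF k" "bF k \<le> B k"
    using feas \<open>k < K\<close> unfolding feasible_def by blast+
  ultimately show ?thesis using \<open>B k = 0\<close> by linarith
qed

theorem theorem1:
  fixes K :: nat and P sb2 sD2 eta1 eta2 :: real
    and h g :: "nat \<Rightarrow> nat \<Rightarrow> complex"
    and lI lF lB bF B :: "nat \<Rightarrow> nat \<Rightarrow> real"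
  assumes "P > 0" and "sb2 > 0" and "sD2 > 0"
    and "0 < eta1" and "eta1 \<le> 1" and "0 < eta2" and "eta2 \<le> 1"
    and "\<And>t k. t \<ge> 1 \<Longrightarrow> k < K \<Longrightarrow> h t k \<noteq> 0 \<and> g t k \<noteq> 0"
    and "\<And>k. k < K \<Longrightarrow> B 1 k = 0"
    and "\<And>t k. t \<ge> 1 \<Longrightarrow> k < K \<Longrightarrow>
           B (t + 1) k = B t k + eta1 * eta2 * lB t k * P * (cmod (h t k))^2 - bF t k"
    and "\<And>t. t \<ge> 1 \<Longrightarrow>
           greedy_opt K P sb2 sD2 eta1 (h t) (g t) (B t) (lI t) (lF t) (lB t) (bF t)"
  shows "\<forall>t\<ge>1. \<forall>k<K. lB t k = 0 \<and> bF t k = 0 \<and> B t k = 0"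
proof -
  have idle: "lB t k = 0 \<and> bF t k = 0" if "t \<ge> 1" "k < K" "B t k = 0" for t k
    using greedy_opt_empty_battery[OF assms(1-4) assms(11)] assms(8) that by blast
  have "B t k = 0" if "t \<ge> 1" "k < K" for t k
    using that(1)
  proof (induction t rule: dec_induct)
    case base
    show ?case using assms(9) \<open>k < K\<close> .
  next
    case (step t)
    with idle \<open>k < K\<close> have "lB t k = 0 \<and> bF t k = 0" by blast
    with step assms(10)[OF step(1) \<open>k < K\<close>] show ?case by simp
  qed
  with idle show ?thesis by blast
qed

end
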